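(* Let $(E,d)$ and $(\tilde E,\tilde d)$ be metric spaces whose Borel $\sigma$-algebras make them standard Borel spaces, and let $h:E\to\tilde E$ be a (bijective) isometry. Let $\nu$ be a Radon probability measure on $E$ and let $h_\#\nu$ be the push-forward, $h_\#\nu(B)=\nu(h^{-1}(B))$. Then for every closed set $A\subset\mathrm{Supp}(h_\#\nu)$ such that the MaxEnt posterior of $(\nu,h^{-1}(A))$ on $(E,d)$ exists, the MaxEnt posterior of $(h_\#\nu,A)$ on $(\tilde E,\tilde d)$ also exists, and $$h_\#\nu(B\mid A)=\nu\big(h^{-1}(B)\mid h^{-1}(A)\big)\quad\text{for every open set }B\subset\tilde E.$$
   Context: MaxEnt posterior on a metric space $(W,\rho)$ (Borel $\sigma$-algebra, standard Borel), with a fixed truncation parameter $R>0$ used in both spaces: for a prior Radon probability $\nu$ and closed $A\subset\mathrm{Supp}(\nu)$ (support = complement of the union of $\nu$-null open sets), consider for each $\sigma>0$ the problem $\inf_\mu\{\mathrm{Ent}_\nu(\mu):\mu(W)=1,\ \int_W\rho_R(w,A)^2\,d\mu(w)\le\sigma^2\}$, with $\rho(w,A)=\inf_{a\in A}\rho(w,a)$, $\rho_R=\min(\rho,R)$, $\mathrm{Ent}_\nu(\mu)=\int\frac{d\mu}{d\nu}\ln\frac{d\mu}{d\nu}\,d\nu$ if $\mu\ll\nu$, $+\infty$ otherwise. If for every $\sigma>0$ the infimum is attained by a unique $\mu_\sigma$ and $\mu_\sigma$ converges weakly as $\sigma\to0$, the limit is the MaxEnt posterior $\nu(\cdot\mid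 A)$. *)

theory Defs
  imports "HOL-Probability.Probability"
begin

definition standard_borel_type :: "'a::metric_space itself \<Rightarrow> bool" where
  "standard_borel_type _ \<longleftrightarrow>
     (\<exists>T :: 'a topology. completely_metrizable_space T \<and> separable_space T \<and>
        topspace T = UNIV \<and>
        sigma_sets UNIV (Collect (openin T)) = sets (borel :: 'a measure))"

(* Radon probability measure on the Borel sets of a metric space
   (inner regular by compact sets; local finiteness is automatic for probabilities) *)
definition radon_prob :: "'a::metric_space measure \<Rightarrow> bool" where
  "radon_prob \<nu> \<longleftrightarrow> prob_space \<nu> \<and> sets \<nu> = sets borel \<and>
     (\<forall>B\<in>sets borel. emeasure \<nu> B = (SUP K\<in>{K. compact K \<and> K \<subseteq> B}. emeasure \<nu> K))"

definition Supp :: "'a::topological_space measure \<Rightarrow> 'a set" where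
  "Supp \<nu> = - \<Union>{U. open U \<and> emeasure \<nu> U = 0}"

(* truncated distance rho_R(w,A) = min(inf_{a\<in>A} dist w a, R); inf over {} is +\<infinity> *)
definition rhoR :: "real \<Rightarrow> 'a::metric_space set \<Rightarrow> 'a \<Rightarrow> real" where
  "rhoR R A w = (if A = {} then R else min (infdist w A) R)"

(* Since f ln f \<ge> -1/e and \<nu> is finite, non-integrability means the integral is +\<infinity>. *)
definition Ent :: "'a measure \<Rightarrow> 'a measure \<Rightarrow> ereal" where
  "Ent \<nu> \<mu> =
    (if absolutely_continuous \<nu> \<mu> \<and> sets \<mu> = sets \<nu> then
       (let f = (\<lambda>x. enn2real (RN_deriv \<nu> \<mu> x)) in
        if integrable \<nu> (\<lambda>x. f x * ln (f x))
        then ereal (\<integral>x. f x * ln (f x) \<partial>\<nu>) else \<infinity>)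
     else \<infinity>)"

definition maxent_feasible :: "real \<Rightarrow> 'a::metric_space set \<Rightarrow> real \<Rightarrow> 'a measure \<Rightarrow> bool" where
  "maxent_feasible R A \<sigma> \<mu> \<longleftrightarrow> sets \<mu> = sets borel \<and> emeasure \<mu> UNIV = 1 \<and>
     (\<integral>\<^sup>+w. ennreal ((rhoR R A w)\<^sup>2) \<partial>\<mu>) \<le> ennreal (\<sigma>\<^sup>2)"

definition maxent_minimizer ::
  "'a::metric_space measure \<Rightarrow> real \<Rightarrow> 'a set \<Rightarrow> real \<Rightarrow> 'a measure \<Rightarrow> bool" where
  "maxent_minimizer \<nu> R A \<sigma> \<mu> \<longleftrightarrow> maxent_feasible R A \<sigma> \<mu> \<and>
     (\<forall>\<mu>'. maxent_feasible R A \<sigma> \<mu>' \<longrightarrow> Ent \<nu> \<mu> \<le> Ent \<nu> \<mu>')"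

definition weak_conv_filter :: "('i \<Rightarrow> 'a::metric_space measure) \<Rightarrow> 'a measure \<Rightarrow> 'i filter \<Rightarrow> bool" where
  "weak_conv_filter M P F \<longleftrightarrow>
     (\<forall>f :: 'a \<Rightarrow> real. continuous_on UNIV f \<and> bounded (range f) \<longrightarrow>
        ((\<lambda>i. \<integral>x. f x \<partial>M i) \<longlongrightarrow> (\<integral>x. f x \<partial>P)) F)"

definition is_maxent_posterior ::
  "'a::metric_space measure \<Rightarrow> real \<Rightarrow> 'a set \<Rightarrow> 'a measure \<Rightarrow> bool" where
  "is_maxent_posterior \<nu> R A P \<longleftrightarrow>
     radon_prob \<nu> \<and> closed A \<and> A \<subseteq> Supp \<nu> \<and>
     (\<forall>\<sigma>>0. \<exists>!\<mu>. maxent_minimizer \<nu> R A \<sigma> \<mu>) \<and>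
     prob_space P \<and> sets P = sets borel \<and>
     weak_conv_filter (\<lambda>\<sigma>. THE \<mu>. maxent_minimizer \<nu> R A \<sigma> \<mu>) P (at_right 0)"

end

theory Submission
  imports Defs
begin

(* An isometric bijection h is a homeomorphism, so pushing measures forward along h preserves
   the Radon property and relative entropy (densities are transported along h), and it turns the
   truncated distance to h -` A into the truncated distance to A.  Hence mu |-> h_# mu is a
   bijection between the feasible sets of the two MaxEnt problems that preserves the objective,
   so it maps the unique minimizers onto each other, and by the continuous mapping theorem
   h_# nu(. | h -` A) is the weak limit of the transported minimizers.  Weak limits of Borel
   probabilities on a metric space are unique, because the indicator of an open set B is the
   increasing limit of the continuous functions min 1 (n * infdist x (-B)). *)

section \<open>Push-forward along measurable bijections\<close>

lemma distr_distr_inverse: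
  assumes h: "h \<in> measurable M N" and g: "g \<in> measurable N M"
    and gh: "\<And>x. x \<in> space M \<Longrightarrow> g (h x) = x" and \<mu>: "sets \<mu> = sets M"
  shows "distr (distr \<mu> N h) M g = \<mu>"
proof -
  have "h \<in> measurable \<mu> N" using h by (simp add: measurable_cong_sets[OF \<mu> refl])
  then have "distr (distr \<mu> N h) M g = distr \<mu> M (g \<circ> h)" by (rule distr_distr[OF g])
  also have "\<dots> = distr \<mu> M (\<lambda>x. x)"
    using gh sets_eq_imp_space_eq[OF \<mu>] by (intro distr_cong) auto
  also have "\<dots> = \<mu>" by (rule distr_id2) (simp add: \<mu>)
  finally show ?thesis .
qed

lemma absolutely_continuous_distr:
  assumes ac: "absolutely_continuous \<nu> \<mu>" and \<mu>: "sets \<mu> = sets \<nu>" and h: "h \<in> measurable \<nu> N"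
  shows "absolutely_continuous (distr \<nu> N h) (distr \<mu> N h)"
  unfolding absolutely_continuous_def
proof
  fix X assume "X \<in> null_sets (distr \<nu> N h)"
  then have "h -` X \<inter> space \<nu> \<in> null_sets \<nu>" "X \<in> sets N"
    using null_sets_distr_iff[OF h] by auto
  then have "h -` X \<inter> space \<mu> \<in> null_sets \<mu>"
    using ac sets_eq_imp_space_eq[OF \<mu>] unfolding absolutely_continuous_def by auto
  moreover have "h \<in> measurable \<mu> N" using h by (simp add: measurable_cong_sets[OF \<mu> refl])
  ultimately show "X \<in> null_sets (distr \<mu> N h)"
    using null_sets_distr_iff \<open>X \<in> sets N\<close> by blast
qed

lemma absolutely_continuous_distr_iff:
  assumes h: "h \<in> measurable M N" and g: "g \<in> measurable N M"
    and gh: "\<And>x. x \<in> space M \<Longrightarrow> g (h x) = x" and \<nu>: "sets \<nu> = sets M" and \<mu>: "sets \<mu> = sets M"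
  shows "absolutely_continuous (distr \<nu> N h) (distr \<mu> N h) \<longleftrightarrow> absolutely_continuous \<nu> \<mu>"
proof
  assume ac: "absolutely_continuous (distr \<nu> N h) (distr \<mu> N h)"
  have g': "g \<in> measurable (distr \<nu> N h) M"
    using g by (simp add: measurable_cong_sets[OF sets_distr refl])
  have "absolutely_continuous (distr (distr \<nu> N h) M g) (distr (distr \<mu> N h) M g)"
    by (rule absolutely_continuous_distr[OF ac _ g']) simp
  then show "absolutely_continuous \<nu> \<mu>"
    using distr_distr_inverse[OF h g gh] \<nu> \<mu> by simp
next
  assume ac: "absolutely_continuous \<nu> \<mu>"
  have h': "h \<in> measurable \<nu> N" using h by (simp add: measurable_cong_sets[OF \<nu> refl])
  show "absolutely_continuous (distr \<nu> N h) (distr \<mu> N h)"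
    by (rule absolutely_continuous_distr[OF ac _ h']) (simp add: \<mu> \<nu>)
qed

lemma Ent_distr:
  assumes h: "h \<in> measurable M N" and g: "g \<in> measurable N M"
    and gh: "\<And>x. x \<in> space M \<Longrightarrow> g (h x) = x"
    and \<nu>: "sets \<nu> = sets M" and \<mu>: "sets \<mu> = sets M" and "sigma_finite_measure \<nu>"
  shows "Ent (distr \<nu> N h) (distr \<mu> N h) = Ent \<nu> \<mu>"
proof (cases "absolutely_continuous \<nu> \<mu>")
  case False
  then show ?thesis
    unfolding Ent_def using absolutely_continuous_distr_iff[OF h g gh \<nu> \<mu>] by simp
next
  case True
  interpret sigma_finite_measure \<nu> by fact
  have ac: "absolutely_continuous (distr \<nu> N h) (distr \<mu> N h)"
    using absolutely_continuous_distr_iff[OF h g gh \<nu> \<mu>] True by simp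
  define xlnx :: "ennreal \<Rightarrow> real" where "xlnx t = enn2real t * ln (enn2real t)" for t
  have [measurable]: "xlnx \<in> borel_measurable borel" unfolding xlnx_def by measurable
  have [measurable]: "RN_deriv (distr \<nu> N h) (distr \<mu> N h) \<in> borel_measurable N"
    using borel_measurable_RN_deriv by (simp add: measurable_cong_sets[OF sets_distr refl])
  have h' [measurable]: "h \<in> measurable \<nu> N" using h by (simp add: measurable_cong_sets[OF \<nu> refl])
  have g': "g \<in> measurable N \<nu>" using g by (simp add: measurable_cong_sets[OF refl \<nu>])
  have "AE x in \<nu>. RN_deriv (distr \<nu> N h) (distr \<mu> N h) (h x) = RN_deriv \<nu> \<mu> x"
    using gh sets_eq_imp_space_eq[OF \<nu>] \<mu> \<nu> by (intro RN_deriv_distr[OF h' g' _ ac]) simp_all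
  then have AE: "AE x in \<nu>. xlnx (RN_deriv (distr \<nu> N h) (distr \<mu> N h) (h x)) = xlnx (RN_deriv \<nu> \<mu> x)"
    by eventually_elim (rule arg_cong)
  let ?F = "\<lambda>y. xlnx (RN_deriv (distr \<nu> N h) (distr \<mu> N h) y)"
  let ?f = "\<lambda>x. xlnx (RN_deriv \<nu> \<mu> x)"
  have "integrable (distr \<nu> N h) ?F \<longleftrightarrow> integrable \<nu> (\<lambda>x. ?F (h x))"
    by (rule integrable_distr_eq[OF h']) measurable
  also have "\<dots> \<longleftrightarrow> integrable \<nu> ?f"
    by (rule integrable_cong_AE[OF _ _ AE]) measurable
  finally have integrable_iff: "integrable (distr \<nu> N h) ?F \<longleftrightarrow> integrable \<nu> ?f" .
  have "(\<integral>y. ?F y \<partial>distr \<nu> N h) = (\<integral>x. ?F (h x) \<partial>\<nu>)"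
    by (rule integral_distr[OF h']) measurable
  also have "\<dots> = (\<integral>x. ?f x \<partial>\<nu>)"
    by (rule integral_cong_AE[OF _ _ AE]) measurable
  finally show ?thesis
    using integrable_iff True ac \<mu> \<nu> unfolding Ent_def by (simp add: Let_def xlnx_def)
qed

section \<open>Radon measures and weak limits\<close>

lemma radon_prob_distr:
  assumes hom: "homeomorphism UNIV UNIV h g" and "radon_prob \<nu>"
  shows "radon_prob (distr \<nu> borel h)"
proof -
  have \<nu>: "prob_space \<nu>" "sets \<nu> = sets borel"
    and inner_regular: "\<And>B. B \<in> sets borel \<Longrightarrow>
      emeasure \<nu> B = (SUP K\<in>{K. compact K \<and> K \<subseteq> B}. emeasure \<nu> K)"
    using \<open>radon_prob \<nu>\<close> unfolding radon_prob_def by auto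
  have gh: "\<And>x. g (h x) = x" "\<And>y. h (g y) = y"
    and cont: "continuous_on UNIV h" "continuous_on UNIV g"
    using hom unfolding homeomorphism_def by auto
  have h_meas [measurable]: "h \<in> borel_measurable borel"
    by (rule borel_measurable_continuous_onI[OF cont(1)])
  have h_meas_\<nu>: "h \<in> measurable \<nu> borel" by (simp add: measurable_cong_sets[OF \<nu>(2) refl])
  have emeasure_distr_h: "emeasure (distr \<nu> borel h) B = emeasure \<nu> (h -` B)" if "B \<in> sets borel" for B
    using emeasure_distr[OF h_meas_\<nu> that] sets_eq_imp_space_eq[OF \<nu>(2)] by simp
  have compact_subsets: "{K. compact K \<and> K \<subseteq> B} = (`) h ` {K. compact K \<and> K \<subseteq> h -` B}" for B
  proof (intro equalityI subsetI)
    fix K assume K: "K \<in> {K. compact K \<and> K \<subseteq> B}"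
    then have "compact (g ` K)"
      using compact_continuous_image[OF continuous_on_subset[OF cont(2)]] by blast
    moreover have "g ` K \<subseteq> h -` B" using K gh by auto
    moreover have "K = h ` g ` K" by (simp add: image_image gh)
    ultimately show "K \<in> (`) h ` {K. compact K \<and> K \<subseteq> h -` B}" by blast
  qed (auto intro: compact_continuous_image[OF continuous_on_subset[OF cont(1)]])
  have "emeasure (distr \<nu> borel h) B = (SUP K\<in>{K. compact K \<and> K \<subseteq> B}. emeasure (distr \<nu> borel h) K)"
    if B: "B \<in> sets borel" for B
  proof -
    have "(SUP K\<in>{K. compact K \<and> K \<subseteq> B}. emeasure (distr \<nu> borel h) K)
        = (SUP K\<in>{K. compact K \<and> K \<subseteq> h -` B}. emeasure (distr \<nu> borel h) (h ` K))"
      unfolding compact_subsets by (simp add: image_image)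
    also have "\<dots> = (SUP K\<in>{K. compact K \<and> K \<subseteq> h -` B}. emeasure \<nu> K)"
    proof (rule SUP_cong[OF refl])
      fix K assume "K \<in> {K. compact K \<and> K \<subseteq> h -` B}"
      then have "h ` K \<in> sets borel"
        using compact_continuous_image[OF continuous_on_subset[OF cont(1)]]
        by (auto intro: borel_closed compact_imp_closed)
      moreover have "h -` h ` K = K" using gh by (metis injI inj_vimage_image_eq)
      ultimately show "emeasure (distr \<nu> borel h) (h ` K) = emeasure \<nu> K"
        by (simp add: emeasure_distr_h)
    qed
    also have "\<dots> = emeasure (distr \<nu> borel h) B"
      using inner_regular[OF measurable_sets_borel[OF h_meas B]] B by (simp add: emeasure_distr_h)
    finally show ?thesis ..
  qed
  then show ?thesis
    unfolding radon_prob_def using prob_space.prob_space_distr[OF \<nu>(1) h_meas_\<nu>] by simp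
qed

lemma weak_conv_filter_cong:
  fixes P :: "'a::metric_space measure"
  assumes "\<forall>\<^sub>F i in F. M i = M' i" and "weak_conv_filter M P F"
  shows "weak_conv_filter M' P F"
  unfolding weak_conv_filter_def
proof (intro allI impI)
  fix f :: "'a \<Rightarrow> real" assume "continuous_on UNIV f \<and> bounded (range f)"
  then have "((\<lambda>i. \<integral>x. f x \<partial>M i) \<longlongrightarrow> (\<integral>x. f x \<partial>P)) F"
    using assms(2) unfolding weak_conv_filter_def by blast
  moreover have "\<forall>\<^sub>F i in F. (\<integral>x. f x \<partial>M i) = (\<integral>x. f x \<partial>M' i)"
    using assms(1) by eventually_elim simp
  ultimately show "((\<lambda>i. \<integral>x. f x \<partial>M' i) \<longlongrightarrow> (\<integral>x. f x \<partial>P)) F"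
    by (simp add: tendsto_cong)
qed

lemma weak_conv_filter_distr:
  fixes h :: "'a::metric_space \<Rightarrow> 'b::metric_space"
  assumes "weak_conv_filter M P F" and cont: "continuous_on UNIV h"
    and sets_M: "\<forall>\<^sub>F i in F. sets (M i) = sets borel" and sets_P: "sets P = sets borel"
  shows "weak_conv_filter (\<lambda>i. distr (M i) borel h) (distr P borel h) F"
  unfolding weak_conv_filter_def
proof (intro allI impI)
  fix f :: "'b \<Rightarrow> real" assume f: "continuous_on UNIV f \<and> bounded (range f)"
  have h_meas: "h \<in> borel_measurable borel" by (rule borel_measurable_continuous_onI[OF cont])
  have f_meas: "f \<in> borel_measurable borel" using f by (intro borel_measurable_continuous_onI) simp
  have integral_distr_h: "(\<integral>x. f x \<partial>distr N borel h) = (\<integral>x. f (h x) \<partial>N)" if "sets N = sets borel" for N :: "'a measure"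
    using h_meas by (intro integral_distr f_meas) (simp add: measurable_cong_sets[OF that refl])
  have "continuous_on UNIV (f \<circ> h)"
    using f by (intro continuous_on_compose[OF cont]) (auto intro: continuous_on_subset)
  moreover have "bounded (range (f \<circ> h))"
    by (rule bounded_subset[of "range f"]) (use f in auto)
  ultimately have "((\<lambda>i. \<integral>x. f (h x) \<partial>M i) \<longlongrightarrow> (\<integral>x. f (h x) \<partial>P)) F"
    using assms(1) unfolding weak_conv_filter_def comp_def by blast
  moreover have "\<forall>\<^sub>F i in F. (\<integral>x. f (h x) \<partial>M i) = (\<integral>x. f x \<partial>distr (M i) borel h)"
    using sets_M by eventually_elim (simp add: integral_distr_h)
  ultimately show "((\<lambda>i. \<integral>x. f x \<partial>distr (M i) borel h) \<longlongrightarrow> (\<integral>x. f x \<partial>distr P borel h)) F"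
    by (simp add: integral_distr_h[OF sets_P] tendsto_cong)
qed

lemma tendsto_min_infdist_indicator:
  fixes B :: "'a::metric_space set"
  assumes "open B" and "B \<noteq> UNIV"
  shows "(\<lambda>n. min 1 (real n * infdist x (- B))) \<longlonglongrightarrow> indicator B x"
proof (cases "x \<in> B")
  case True
  have "closed (- B)" "- B \<noteq> {}" using assms by auto
  then have pos: "infdist x (- B) > 0" using True infdist_pos_not_in_closed by auto
  obtain n0 :: nat where n0: "1 / infdist x (- B) < real n0" using reals_Archimedean2 by blast
  have "min 1 (real n * infdist x (- B)) = indicator B x" if "n \<ge> n0" for n
  proof -
    have "1 / infdist x (- B) < real n" using n0 that by linarith
    then show ?thesis using pos True by (simp add: field_simps)
  qed
  then show ?thesis by (intro tendsto_eventually eventually_sequentiallyI)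
qed simp

lemma finite_measure_tendsto_integral_min_infdist:
  fixes P :: "'a::metric_space measure"
  assumes "finite_measure P" "sets P = sets borel" "open B" "B \<noteq> UNIV"
  shows "(\<lambda>n. \<integral>x. min 1 (real n * infdist x (- B)) \<partial>P) \<longlonglongrightarrow> measure P B"
proof -
  interpret finite_measure P by fact
  have "(\<lambda>n. \<integral>x. min 1 (real n * infdist x (- B)) \<partial>P) \<longlonglongrightarrow> (\<integral>x. indicator B x \<partial>P)"
  proof (rule integral_dominated_convergence[where w="\<lambda>_. 1"])
    show "(\<lambda>x. min 1 (real n * infdist x (- B))) \<in> borel_measurable P" for n
      unfolding measurable_cong_sets[OF assms(2) refl]
      by (intro borel_measurable_continuous_onI continuous_intros)
    show "AE x in P. norm (min 1 (real n * infdist x (- B))) \<le> 1" for n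
      by (simp add: infdist_nonneg)
    show "AE x in P. (\<lambda>n. min 1 (real n * infdist x (- B))) \<longlonglongrightarrow> indicator B x"
      using assms(3,4) by (simp add: tendsto_min_infdist_indicator)
  qed (simp_all add: assms(3) measurable_cong_sets[OF assms(2) refl])
  then show ?thesis using assms(2,3) by simp
qed

lemma measure_eqI_bounded_continuous:
  fixes P Q :: "'a::metric_space measure"
  assumes P: "finite_measure P" "sets P = sets borel" and Q: "finite_measure Q" "sets Q = sets borel"
    and integral_eq: "\<And>f :: 'a \<Rightarrow> real. continuous_on UNIV f \<Longrightarrow> bounded (range f) \<Longrightarrow>
      (\<integral>x. f x \<partial>P) = (\<integral>x. f x \<partial>Q)"
  shows "P = Q"
proof (rule measure_eqI_generator_eq[where \<Omega> = UNIV and E = "{B. open B}" and A = "\<lambda>_. UNIV"])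
  fix B :: "'a set" assume "B \<in> {B. open B}"
  then have "open B" by simp
  have "measure P B = measure Q B"
  proof (cases "B = UNIV")
    case True
    \<comment> \<open>here \<open>infdist x (- B) = 0\<close>, so the approximation below is useless\<close>
    have "(\<integral>x. 1 \<partial>P) = (\<integral>x. 1 \<partial>Q :: real)"
      by (rule integral_eq) auto
    then show ?thesis
      using True sets_eq_imp_space_eq[OF P(2)] sets_eq_imp_space_eq[OF Q(2)] by simp
  next
    case False
    have integrals_eq: "(\<integral>x. min 1 (real n * infdist x (- B)) \<partial>P) = (\<integral>x. min 1 (real n * infdist x (- B)) \<partial>Q)" for n
    proof (rule integral_eq)
      show "continuous_on UNIV (\<lambda>x. min 1 (real n * infdist x (- B)))"
        by (intro continuous_intros)
      show "bounded (range (\<lambda>x. min 1 (real n * infdist x (- B))))"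
        unfolding bounded_real by (intro exI[of _ 1]) (simp add: infdist_nonneg)
    qed
    have "(\<lambda>n. \<integral>x. min 1 (real n * infdist x (- B)) \<partial>Q) \<longlonglongrightarrow> measure P B"
      using finite_measure_tendsto_integral_min_infdist[OF P \<open>open B\<close> False] by (simp add: integrals_eq)
    then show ?thesis
      by (rule LIMSEQ_unique[OF _ finite_measure_tendsto_integral_min_infdist[OF Q \<open>open B\<close> False]])
  qed
  then show "emeasure P B = emeasure Q B"
    using finite_measure.emeasure_eq_measure[OF P(1)] finite_measure.emeasure_eq_measure[OF Q(1)] by simp
next
  show "emeasure P UNIV \<noteq> \<infinity>" for i :: nat
    using finite_measure.emeasure_finite[OF P(1)] by simp
qed (simp_all add: Int_stable_def open_Int P(2) Q(2) sets_borel)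

lemma weak_conv_filter_unique:
  fixes P Q :: "'a::metric_space measure"
  assumes "F \<noteq> bot" "weak_conv_filter M P F" "weak_conv_filter M Q F"
    and "finite_measure P" "sets P = sets borel" "finite_measure Q" "sets Q = sets borel"
  shows "P = Q"
proof (rule measure_eqI_bounded_continuous[OF assms(4-7)])
  fix f :: "'a \<Rightarrow> real" assume "continuous_on UNIV f" "bounded (range f)"
  then show "(\<integral>x. f x \<partial>P) = (\<integral>x. f x \<partial>Q)"
    using assms(2,3) unfolding weak_conv_filter_def by (blast intro: tendsto_unique[OF assms(1)])
qed

lemma is_maxent_posterior_unique:
  assumes "is_maxent_posterior \<nu> R A P" and "is_maxent_posterior \<nu> R A Q"
  shows "P = Q"
  using assms trivial_limit_at_right_real prob_space.finite_measure
  unfolding is_maxent_posterior_def by (metis weak_conv_filter_unique)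

section \<open>Transport of the MaxEnt problem along an isometric bijection\<close>

lemma continuous_on_rhoR: "continuous_on UNIV (rhoR R A)"
  unfolding rhoR_def by (cases "A = {}") (simp_all add: continuous_intros)

locale isometric_bijection =
  fixes h :: "'a::metric_space \<Rightarrow> 'b::metric_space"
  assumes bij: "bij h" and dist_eq: "\<And>x y. dist (h x) (h y) = dist x y"
begin

lemma h_inv_h [simp]: "h (inv h y) = y" and inv_h_h [simp]: "inv h (h x) = x"
  using bij by (simp_all add: bij_is_inj bij_is_surj surj_f_inv_f)

lemma inv_isometric_bijection: "isometric_bijection (inv h)"
proof
  show "bij (inv h)" using bij by (rule bij_imp_bij_inv)
  show "dist (inv h x) (inv h y) = dist x y" for x y
    using dist_eq[of "inv h x" "inv h y"] by simp
qed

lemma continuous_on_h: "continuous_on UNIV h"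
  unfolding continuous_on_iff using dist_eq by metis

lemma homeomorphism_h: "homeomorphism UNIV UNIV h (inv h)"
  using continuous_on_h isometric_bijection.continuous_on_h[OF inv_isometric_bijection]
    bij bij_imp_bij_inv[OF bij]
  unfolding homeomorphism_def by (simp add: bij_is_surj)

lemma measurable_h [measurable]: "h \<in> borel_measurable borel"
  by (rule borel_measurable_continuous_onI[OF continuous_on_h])

lemma measurable_inv_h [measurable]: "inv h \<in> borel_measurable borel"
  by (rule isometric_bijection.measurable_h[OF inv_isometric_bijection])

lemma distr_distr_inv: "sets \<mu> = sets borel \<Longrightarrow> distr (distr \<mu> borel (inv h)) borel h = \<mu>"
  by (rule distr_distr_inverse[OF measurable_inv_h measurable_h]) simp_all

lemma image_vimage_h: "h ` (h -` A) = A"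
  using bij by (simp add: bij_is_surj surj_image_vimage_eq)

lemma vimage_h_eq_empty_iff: "h -` A = {} \<longleftrightarrow> A = {}"
  by (metis image_empty image_vimage_h vimage_empty)

lemma infdist_h: "infdist (h w) A = infdist w (h -` A)"
proof -
  have "(INF a\<in>A. dist (h w) a) = (INF a\<in>h ` (h -` A). dist (h w) a)"
    by (simp only: image_vimage_h)
  also have "\<dots> = (INF a\<in>h -` A. dist w a)"
    by (simp only: image_image dist_eq)
  finally show ?thesis
    unfolding infdist_def by (simp add: vimage_h_eq_empty_iff)
qed

lemma rhoR_h: "rhoR R A (h w) = rhoR R (h -` A) w"
  unfolding rhoR_def by (simp add: infdist_h vimage_h_eq_empty_iff)

lemma maxent_feasible_distr_iff:
  assumes "sets \<mu> = sets borel"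
  shows "maxent_feasible R A \<sigma> (distr \<mu> borel h) \<longleftrightarrow> maxent_feasible R (h -` A) \<sigma> \<mu>"
proof -
  have h_meas_\<mu>: "h \<in> measurable \<mu> borel" by (simp add: measurable_cong_sets[OF assms refl])
  have "rhoR R A \<in> borel_measurable borel"
    by (rule borel_measurable_continuous_onI[OF continuous_on_rhoR])
  then have "(\<integral>\<^sup>+w. ennreal ((rhoR R A w)\<^sup>2) \<partial>distr \<mu> borel h) = (\<integral>\<^sup>+w. ennreal ((rhoR R (h -` A) w)\<^sup>2) \<partial>\<mu>)"
    by (simp add: nn_integral_distr[OF h_meas_\<mu>] rhoR_h)
  moreover have "emeasure (distr \<mu> borel h) UNIV = emeasure \<mu> UNIV"
    using emeasure_distr[OF h_meas_\<mu>] sets_eq_imp_space_eq[OF assms] by simp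
  ultimately show ?thesis unfolding maxent_feasible_def using assms by simp
qed

lemma maxent_feasible_eq_image_distr:
  "Collect (maxent_feasible R A \<sigma>) = (\<lambda>\<mu>. distr \<mu> borel h) ` Collect (maxent_feasible R (h -` A) \<sigma>)"
proof (intro equalityI subsetI)
  fix \<mu> assume "\<mu> \<in> Collect (maxent_feasible R A \<sigma>)"
  then have "maxent_feasible R A \<sigma> \<mu>" and \<mu>: "sets \<mu> = sets borel"
    unfolding maxent_feasible_def by auto
  then have "maxent_feasible R (h -` A) \<sigma> (distr \<mu> borel (inv h))"
    by (simp add: distr_distr_inv flip: maxent_feasible_distr_iff)
  with distr_distr_inv[OF \<mu>] show "\<mu> \<in> (\<lambda>\<mu>. distr \<mu> borel h) ` Collect (maxent_feasible R (h -` A) \<sigma>)"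
    by force
next
  fix \<mu> assume "\<mu> \<in> (\<lambda>\<mu>. distr \<mu> borel h) ` Collect (maxent_feasible R (h -` A) \<sigma>)"
  then obtain \<mu>\<^sub>0 where "maxent_feasible R (h -` A) \<sigma> \<mu>\<^sub>0" and \<mu>: "\<mu> = distr \<mu>\<^sub>0 borel h"
    by blast
  moreover have "sets \<mu>\<^sub>0 = sets borel" using calculation(1) unfolding maxent_feasible_def by simp
  ultimately show "\<mu> \<in> Collect (maxent_feasible R A \<sigma>)" by (simp add: maxent_feasible_distr_iff)
qed

lemma Ent_distr_h:
  assumes "sigma_finite_measure \<nu>" "sets \<nu> = sets borel" "sets \<mu> = sets borel"
  shows "Ent (distr \<nu> borel h) (distr \<mu> borel h) = Ent \<nu> \<mu>"
  using Ent_distr[OF measurable_h measurable_inv_h _ assms(2,3,1)] by simp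

lemma maxent_minimizer_distr_iff:
  assumes \<nu>: "sigma_finite_measure \<nu>" "sets \<nu> = sets borel" and \<mu>: "sets \<mu> = sets borel"
  shows "maxent_minimizer (distr \<nu> borel h) R A \<sigma> (distr \<mu> borel h) \<longleftrightarrow> maxent_minimizer \<nu> R (h -` A) \<sigma> \<mu>"
proof -
  have all_feasible: "(\<forall>\<mu>'. maxent_feasible R A \<sigma> \<mu>' \<longrightarrow> Q \<mu>')
      \<longleftrightarrow> (\<forall>\<mu>'. maxent_feasible R (h -` A) \<sigma> \<mu>' \<longrightarrow> Q (distr \<mu>' borel h))" for Q
  proof -
    have "(\<forall>\<mu>'. maxent_feasible R A \<sigma> \<mu>' \<longrightarrow> Q \<mu>') \<longleftrightarrow> (\<forall>\<mu>'\<in>Collect (maxent_feasible R A \<sigma>). Q \<mu>')"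
      by simp
    then show ?thesis unfolding maxent_feasible_eq_image_distr by simp
  qed
  have feasible_sets: "maxent_feasible R (h -` A) \<sigma> \<mu>' \<Longrightarrow> sets \<mu>' = sets borel" for \<mu>'
    unfolding maxent_feasible_def by simp
  show ?thesis
    unfolding maxent_minimizer_def all_feasible
    using feasible_sets by (simp add: maxent_feasible_distr_iff \<mu> Ent_distr_h[OF \<nu>])
qed

lemma maxent_minimizers_eq_image_distr:
  assumes \<nu>: "sigma_finite_measure \<nu>" "sets \<nu> = sets borel"
  shows "Collect (maxent_minimizer (distr \<nu> borel h) R A \<sigma>)
    = (\<lambda>\<mu>. distr \<mu> borel h) ` Collect (maxent_minimizer \<nu> R (h -` A) \<sigma>)"
proof (intro equalityI subsetI)
  fix \<mu> assume "\<mu> \<in> Collect (maxent_minimizer (distr \<nu> borel h) R A \<sigma>)"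
  then have minimizer: "maxent_minimizer (distr \<nu> borel h) R A \<sigma> \<mu>" by simp
  then have "\<mu> \<in> Collect (maxent_feasible R A \<sigma>)" unfolding maxent_minimizer_def by simp
  then obtain \<mu>\<^sub>0 where "maxent_feasible R (h -` A) \<sigma> \<mu>\<^sub>0" and \<mu>: "\<mu> = distr \<mu>\<^sub>0 borel h"
    unfolding maxent_feasible_eq_image_distr by blast
  then have "sets \<mu>\<^sub>0 = sets borel" unfolding maxent_feasible_def by simp
  with minimizer \<mu> show "\<mu> \<in> (\<lambda>\<mu>. distr \<mu> borel h) ` Collect (maxent_minimizer \<nu> R (h -` A) \<sigma>)"
    by (auto simp: maxent_minimizer_distr_iff[OF \<nu>])
next
  fix \<mu> assume "\<mu> \<in> (\<lambda>\<mu>. distr \<mu> borel h) ` Collect (maxent_minimizer \<nu> R (h -` A) \<sigma>)"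
  then obtain \<mu>\<^sub>0 where "maxent_minimizer \<nu> R (h -` A) \<sigma> \<mu>\<^sub>0" and "\<mu> = distr \<mu>\<^sub>0 borel h"
    by blast
  moreover have "sets \<mu>\<^sub>0 = sets borel"
    using calculation(1) unfolding maxent_minimizer_def maxent_feasible_def by simp
  ultimately show "\<mu> \<in> Collect (maxent_minimizer (distr \<nu> borel h) R A \<sigma>)"
    by (simp add: maxent_minimizer_distr_iff[OF \<nu>])
qed

lemma is_maxent_posterior_distr:
  assumes "closed A" and "A \<subseteq> Supp (distr \<nu> borel h)" and "is_maxent_posterior \<nu> R (h -` A) P"
  shows "is_maxent_posterior (distr \<nu> borel h) R A (distr P borel h)"
proof -
  let ?minimizer = "\<lambda>\<sigma>. THE \<mu>. maxent_minimizer \<nu> R (h -` A) \<sigma> \<mu>"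
  let ?minimizer' = "\<lambda>\<sigma>. THE \<mu>. maxent_minimizer (distr \<nu> borel h) R A \<sigma> \<mu>"
  have \<nu>: "radon_prob \<nu>" and unique: "\<And>\<sigma>. \<sigma> > 0 \<Longrightarrow> \<exists>!\<mu>. maxent_minimizer \<nu> R (h -` A) \<sigma> \<mu>"
    and P: "prob_space P" "sets P = sets borel" and conv: "weak_conv_filter ?minimizer P (at_right 0)"
    using assms(3) unfolding is_maxent_posterior_def by auto
  have \<nu>_sets: "sets \<nu> = sets borel" and \<nu>_finite: "sigma_finite_measure \<nu>"
    using \<nu> unfolding radon_prob_def by (auto intro: prob_space_imp_sigma_finite)
  have minimizers': "Collect (maxent_minimizer (distr \<nu> borel h) R A \<sigma>) = {distr (?minimizer \<sigma>) borel h}"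
    if "\<sigma> > 0" for \<sigma>
  proof -
    have "Collect (maxent_minimizer \<nu> R (h -` A) \<sigma>) = {?minimizer \<sigma>}"
      using unique[OF that] theI'[OF unique[OF that]] by blast
    then show ?thesis by (simp add: maxent_minimizers_eq_image_distr[OF \<nu>_finite \<nu>_sets])
  qed
  then have unique': "\<forall>\<sigma>>0. \<exists>!\<mu>. maxent_minimizer (distr \<nu> borel h) R A \<sigma> \<mu>"
    by (metis mem_Collect_eq singletonD singletonI)
  have "?minimizer' \<sigma> = distr (?minimizer \<sigma>) borel h" if "\<sigma> > 0" for \<sigma>
    using minimizers'[OF that] by (metis mem_Collect_eq singletonD singletonI the_equality)
  then have minimizer'_eventually: "\<forall>\<^sub>F \<sigma> in at_right 0. distr (?minimizer \<sigma>) borel h = ?minimizer' \<sigma>"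
    using eventually_at_right_less[of 0] by (auto elim: eventually_mono)
  have "\<forall>\<^sub>F \<sigma> in at_right 0. sets (?minimizer \<sigma>) = sets borel"
    using eventually_at_right_less[of 0] proof eventually_elim
    case (elim \<sigma>)
    then show ?case
      using theI'[OF unique[OF elim]] unfolding maxent_minimizer_def maxent_feasible_def by simp
  qed
  then have "weak_conv_filter (\<lambda>\<sigma>. distr (?minimizer \<sigma>) borel h) (distr P borel h) (at_right 0)"
    by (rule weak_conv_filter_distr[OF conv continuous_on_h _ P(2)])
  then have "weak_conv_filter ?minimizer' (distr P borel h) (at_right 0)"
    by (rule weak_conv_filter_cong[OF minimizer'_eventually])
  moreover have "prob_space (distr P borel h)"
    by (rule prob_space.prob_space_distr[OF P(1)]) (simp add: measurable_cong_sets[OF P(2) refl])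
  ultimately show ?thesis
    unfolding is_maxent_posterior_def
    using radon_prob_distr[OF homeomorphism_h \<nu>] assms(1,2) unique' by simp
qed

end


theorem proposition3p8:
  fixes h :: "'a::metric_space \<Rightarrow> 'b::metric_space"
    and \<nu> :: "'a measure" and R :: "real" and A :: "'b set"
  assumes "standard_borel_type TYPE('a)" and "standard_borel_type TYPE('b)"
    and "R > 0"
    and "bij h" and "\<And>x y. dist (h x) (h y) = dist x y"
    and "radon_prob \<nu>"
    and "closed A" and "A \<subseteq> Supp (distr \<nu> borel h)"
    and "\<exists>P. is_maxent_posterior \<nu> R (h -` A) P"
  shows "(\<exists>Q. is_maxent_posterior (distr \<nu> borel h) R A Q) \<and>
    (\<forall>P Q. is_maxent_posterior \<nu> R (h -` A) P \<longrightarrow>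
       is_maxent_posterior (distr \<nu> borel h) R A Q \<longrightarrow>
       (\<forall>B. open B \<longrightarrow> emeasure Q B = emeasure P (h -` B)))"
proof -
  interpret isometric_bijection h
    using assms(4,5) by unfold_locales
  have transported: "is_maxent_posterior (distr \<nu> borel h) R A (distr P borel h)"
    if "is_maxent_posterior \<nu> R (h -` A) P" for P
    using is_maxent_posterior_distr[OF assms(7,8) that] .
  have "emeasure Q B = emeasure P (h -` B)"
    if P: "is_maxent_posterior \<nu> R (h -` A) P" and Q: "is_maxent_posterior (distr \<nu> borel h) R A Q"
      and "open B" for P Q B
  proof -
    have "Q = distr P borel h" by (rule is_maxent_posterior_unique[OF Q transported[OF P]])
    moreover have "sets P = sets borel" using P unfolding is_maxent_posterior_def by simp
    ultimately show ?thesis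
      using emeasure_distr[of h P borel B] \<open>open B\<close> sets_eq_imp_space_eq[of P borel]
      by (simp add: measurable_cong_sets[of P borel])
  qed
  then show ?thesis using assms(9) transported by blast
qed

end
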